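(* Let $\pi:\mathbb R^n\times[0,\infty]\to[0,\infty]$ be an arbitrage-free price function. Then: (1) $\pi(\mathbf 0,v)=0$ for every $v\in[0,\infty]$; (2) if $v\le v'$ then $\pi(\mathbf q,v)\ge\pi(\mathbf q,v')$; (3) $\pi(\mathbf q,0)\ge\pi(\mathbf q,v)$ for all $v\ge 0$; (4) if $\pi$ is continuous, then $\pi(\mathbf q,\infty)=0$ for every $\mathbf q\in\mathbb R^n$.
   Context: A query is a pair $(\mathbf q,v)$ with $\mathbf q\in\mathbb R^n$ and $v\in[0,\infty]$ (arithmetic in $[0,\infty]$ with $0\cdot\infty=0$). The determinacy relation $\mathbf S\rightarrow\mathbf Q$ between finite multisets of queries and queries is the smallest relation satisfying: (Summation) for every $k\ge 0$, $\{(\mathbf q_1,v_1),\ldots,(\mathbf q_k,v_k)\}\rightarrow(\mathbf q_1+\cdots+\mathbf q_k,\,v_1+\cdots+v_k)$ (for $k=0$: $\emptyset\rightarrow(\mathbf 0,0)$); (Scalar multiplication) for every $c\in\mathbb R$, $\{(\mathbf q,v)\}\rightarrow(c\mathbf q,c^2v)$; (Relaxation) $\{(\mathbf q,v)\}\rightarrow(\mathbf q,v')$ whenever $v\le v'$; (Transitivity) if $\mathbf S_1\rightarrow\mathbf Q_1,\ldots,\mathbf S_k\rightarrow\mathbf Q_k$ and $\{\mathbf Q_1,\ldots,\mathbf Q_k\}\rightarrow\mathbf Q$, then $\mathbf S_1\uplus\cdots\uplus\mathbf S_k\rightarrow\mathbf Q$. A price function $\pi:\mathbb R^n\times[0,\infty]\to[0,\infty]$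 is arbitrage-free if for every $m\ge 0$ and queries $\mathbf Q_1,\ldots,\mathbf Q_m,\mathbf Q$ with $\{\mathbf Q_1,\ldots,\mathbf Q_m\}\rightarrow\mathbf Q$ we have $\pi(\mathbf Q)\le\sum_{i=1}^m\pi(\mathbf Q_i)$ (the empty sum being $0$). *)

theory Defs
  imports "HOL-Analysis.Analysis" "HOL-Library.Multiset" "HOL-Library.Extended_Nonnegative_Real"
begin

text \<open>A query is a pair (q, v) with q in R^n (here \<open>real^'n\<close>) and v in [0,\<infinity>]
  (here \<open>ennreal\<close>, where 0 * \<infinity> = 0).\<close>

type_synonym 'n query = "(real^'n) \<times> ennreal"

text \<open>In the transitivity rule, the list ps holds the pairs (S_i, Q_i).\<close>

inductive determines :: "('n::finite) query multiset \<Rightarrow> 'n query \<Rightarrow> bool" where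
  summation: "determines (mset qs) (sum_list (map fst qs), sum_list (map snd qs))"
| scalar: "determines {#(q, v)#} (c *\<^sub>R q, ennreal (c\<^sup>2) * v)"
| relax: "v \<le> v' \<Longrightarrow> determines {#(q, v)#} (q, v')"
| trans: "\<lbrakk>\<forall>p\<in>set ps. determines (fst p) (snd p);
           determines (mset (map snd ps)) Q\<rbrakk>
          \<Longrightarrow> determines (sum_list (map fst ps)) Q"

definition arbitrage_free :: "(('n::finite) query \<Rightarrow> ennreal) \<Rightarrow> bool" where
  "arbitrage_free \<pi> \<longleftrightarrow>
     (\<forall>S Q. determines S Q \<longrightarrow> \<pi> Q \<le> sum_mset (image_mset \<pi> S))"

end

theory Submission
  imports Defs
begin

text \<open>Relaxation makes the price antitone in the variance, and the empty summation prices
  \<open>(0, 0)\<close> at \<open>0\<close>; together these give (1)--(3). For (4), scaling by \<open>1/c\<close> maps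
  \<open>(c q, \<infinity>)\<close> to \<open>(q, \<infinity>)\<close>, so \<open>\<pi>(q, \<infinity>) \<le> \<pi>(c q, \<infinity>)\<close> for every \<open>c \<noteq> 0\<close>;
  letting \<open>c \<rightarrow> 0\<close> and using continuity yields \<open>\<pi>(q, \<infinity>) \<le> \<pi>(0, \<infinity>) = 0\<close>.\<close>

lemma arbitrage_freeD:
  "arbitrage_free \<pi> \<Longrightarrow> determines S Q \<Longrightarrow> \<pi> Q \<le> sum_mset (image_mset \<pi> S)"
  unfolding arbitrage_free_def by blast

lemma arbitrage_free_antimono_variance:
  assumes "arbitrage_free \<pi>" and "v \<le> v'"
  shows "\<pi> (q, v') \<le> \<pi> (q, v)"
  using arbitrage_freeD[OF assms(1) determines.relax[OF assms(2)]] by simp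

lemma arbitrage_free_zero_query:
  assumes "arbitrage_free \<pi>"
  shows "\<pi> (0, v) = 0"
proof -
  have "\<pi> (0, 0) = 0"
    using arbitrage_freeD[OF assms determines.summation[of "[]"]] by simp
  with arbitrage_free_antimono_variance[OF assms zero_le, of 0 v] show ?thesis
    by simp
qed

lemma arbitrage_free_infinite_le_scaled:
  assumes "arbitrage_free \<pi>" and "c \<noteq> 0"
  shows "\<pi> (q, \<infinity>) \<le> \<pi> (c *\<^sub>R q, \<infinity>)"
proof -
  have "ennreal ((1/c)\<^sup>2) * \<infinity> = \<infinity>"
    using assms(2) by (simp add: ennreal_mult_top)
  moreover have "(1/c) *\<^sub>R (c *\<^sub>R q) = q"
    using assms(2) by simp
  ultimately show ?thesis
    using arbitrage_freeD[OF assms(1) determines.scalar[of "c *\<^sub>R q" \<infinity> "1/c"]] by simp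
qed

lemma arbitrage_free_continuous_infinite_variance:
  assumes "arbitrage_free \<pi>" and "continuous_on UNIV \<pi>"
  shows "\<pi> (q, \<infinity>) = 0"
proof -
  have "(\<lambda>k. (1 / real (Suc k)) *\<^sub>R q) \<longlonglongrightarrow> 0 *\<^sub>R q"
    by (intro tendsto_scaleR tendsto_const LIMSEQ_Suc[OF lim_1_over_n])
  then have "(\<lambda>k. ((1 / real (Suc k)) *\<^sub>R q, \<infinity>::ennreal)) \<longlonglongrightarrow> (0, \<infinity>)"
    by (auto intro: tendsto_Pair)
  then have "(\<lambda>k. \<pi> ((1 / real (Suc k)) *\<^sub>R q, \<infinity>)) \<longlonglongrightarrow> \<pi> (0, \<infinity>)"
    by (rule continuous_on_tendsto_compose[OF assms(2)]) auto
  then have "\<pi> (q, \<infinity>) \<le> \<pi> (0, \<infinity>)"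
    by (rule LIMSEQ_le_const) (use arbitrage_free_infinite_le_scaled[OF assms(1)] in auto)
  then show ?thesis
    using arbitrage_free_zero_query[OF assms(1)] by simp
qed

theorem proposition3:
  fixes \<pi> :: "(real^'n) \<times> ennreal \<Rightarrow> ennreal"
  assumes "arbitrage_free \<pi>"
  shows "(\<forall>v. \<pi> (0, v) = 0)
    \<and> (\<forall>q v v'. v \<le> v' \<longrightarrow> \<pi> (q, v') \<le> \<pi> (q, v))
    \<and> (\<forall>q v. \<pi> (q, v) \<le> \<pi> (q, 0))
    \<and> (continuous_on UNIV \<pi> \<longrightarrow> (\<forall>q. \<pi> (q, \<infinity>) = 0))"
  using arbitrage_free_zero_query[OF assms]
    arbitrage_free_antimono_variance[OF assms]
    arbitrage_free_continuous_infinite_variance[OF assms]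
  by (meson zero_le)

end
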